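(* For every $c>2$ and every instance $(A,C,k)$, there exists a committee satisfying EJR+ whose representation ratio is at least $\frac34$ and whose utilitarian ratio is at least $\min\left(\frac{2}{\sqrt{ck}}-\frac2k,\ \frac{(c-2)^2}{4c^2}-\frac1k\right)$.
   Context: An instance $(A,C,k)$ consists of a finite nonempty candidate set $C$, voters $N=\{1,\dots,n\}$, approval sets $A_i\subseteq C$, and a committee size $1\le k\le|C|$. A committee is $W\subseteq C$ with $|W|\le k$. $\mathrm{sw}(W)=\sum_i|A_i\cap W|$ and $\mathrm{cov}(W)=|\{i:A_i\cap W\ne\emptyset\}|$; the utilitarian ratio is $\mathrm{sw}(W)/\max\{\mathrm{sw}(W'):|W'|=k\}$ and the representation ratio is $\mathrm{cov}(W)/\max\{\mathrm{cov}(W'):|W'|=k\}$. $W$ satisfies EJR+ if for every $\ell\in\{1,\dots,k\}$ and every $N'\subseteq N$ with $|N'|\ge\ell n/k$ and $\bigcap_{i\in N'}A_i\ne\emptyset$, either some $i\in N'$ has $|A_i\cap W|\ge\ell$ or $\bigcap_{i\in N'}A_i\subseteq W$. *)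

theory Defs
  imports Complex_Main
begin

definition sw :: "nat \<Rightarrow> (nat \<Rightarrow> 'c set) \<Rightarrow> 'c set \<Rightarrow> nat" where
  "sw n A W = (\<Sum>i\<in>{1..n}. card (A i \<inter> W))"

definition cov :: "nat \<Rightarrow> (nat \<Rightarrow> 'c set) \<Rightarrow> 'c set \<Rightarrow> nat" where
  "cov n A W = card {i\<in>{1..n}. A i \<inter> W \<noteq> {}}"

definition max_sw :: "nat \<Rightarrow> (nat \<Rightarrow> 'c set) \<Rightarrow> 'c set \<Rightarrow> nat \<Rightarrow> nat" where
  "max_sw n A C k = Max {sw n A W' | W'. W' \<subseteq> C \<and> card W' = k}"

definition max_cov :: "nat \<Rightarrow> (nat \<Rightarrow> 'c set) \<Rightarrow> 'c set \<Rightarrow> nat \<Rightarrow> nat" where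
  "max_cov n A C k = Max {cov n A W' | W'. W' \<subseteq> C \<and> card W' = k}"

definition util_ratio :: "nat \<Rightarrow> (nat \<Rightarrow> 'c set) \<Rightarrow> 'c set \<Rightarrow> nat \<Rightarrow> 'c set \<Rightarrow> real" where
  "util_ratio n A C k W =
     (if max_sw n A C k = 0 then 1 else real (sw n A W) / real (max_sw n A C k))"

definition rep_ratio :: "nat \<Rightarrow> (nat \<Rightarrow> 'c set) \<Rightarrow> 'c set \<Rightarrow> nat \<Rightarrow> 'c set \<Rightarrow> real" where
  "rep_ratio n A C k W =
     (if max_cov n A C k = 0 then 1 else real (cov n A W) / real (max_cov n A C k))"

definition EJR_plus :: "nat \<Rightarrow> (nat \<Rightarrow> 'c set) \<Rightarrow> nat \<Rightarrow> 'c set \<Rightarrow> bool" where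
  "EJR_plus n A k W \<longleftrightarrow>
     (\<forall>l\<in>{1..k}. \<forall>N'. N' \<subseteq> {1..n} \<and> real (card N') \<ge> real l * real n / real k
        \<and> \<Inter>(A ` N') \<noteq> {} \<longrightarrow>
          (\<exists>i\<in>N'. card (A i \<inter> W) \<ge> l) \<or> \<Inter>(A ` N') \<subseteq> W)"

definition abc_instance :: "nat \<Rightarrow> (nat \<Rightarrow> 'c set) \<Rightarrow> 'c set \<Rightarrow> nat \<Rightarrow> bool" where
  "abc_instance n A C k \<longleftrightarrow> finite C \<and> C \<noteq> {} \<and> n \<ge> 1 \<and>
     (\<forall>i\<in>{1..n}. A i \<subseteq> C) \<and> 1 \<le> k \<and> k \<le> card C"

end

theory Submission
  imports Defs
begin

(* The committee is built in three stages.  First run the Greedy Justified Candidate Rule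
   (GJCR): for l = k, ..., 1 it repeatedly adds, among the candidates approved by at least l n / k
   voters that have fewer than l approved members so far, one of maximal approval score.  Its
   output G satisfies EJR+, covers at least |G| n / k voters by a load argument, and every
   candidate outside G with score at least l n / k is outscored by at least l members of G.
   Second, spend r slots on those members of an optimal-coverage committee that cover the most
   voters not yet covered by G, with r least such that the coverage reaches 3/4 of the optimum.
   Third, fill the remaining k - |G| - r slots with the best members of a welfare-optimal
   committee.  If |G| n / k + u < 2 n / c, where u counts the voters the optimal-coverage
   committee adds to G, few slots went to coverage and the welfare slots alone give the ratio
   (c-2)^2/(4c^2) - 1/k.  Otherwise G and the coverage slots already carry much welfare compared
   with the strongest remaining candidate, and an AM-GM estimate gives 2/sqrt(ck) - 2/k.  Adding
   candidates never destroys EJR+. *)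

section \<open>Elementary inequalities\<close>

lemma le_ratio_if_zero_one:
  fixes a b :: nat and q :: real
  assumes "q \<le> 1" "q * real b \<le> real a"
  shows "q \<le> (if b = 0 then 1 else real a / real b)"
  using assms by (auto simp: field_simps)

lemma div_add_le_div:
  fixes s opt lb z :: real
  assumes "0 \<le> lb" "lb \<le> s" "0 < opt" "opt \<le> s + z" "0 < z"
  shows "lb / (lb + z) \<le> s / opt"
proof -
  have "lb * opt \<le> lb * (s + z)" using assms by (intro mult_left_mono) auto
  also have "\<dots> \<le> s * (lb + z)" using assms by (simp add: algebra_simps mult_right_mono)
  finally show ?thesis using assms by (simp add: field_simps)
qed

lemma below_threshold:
  fixes l n s m :: nat
  assumes "l * n \<le> s" "s < m * n"
  shows "l < m"
proof -
  have "l * n < m * n" using assms by (rule le_less_trans)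
  then show ?thesis by simp
qed

lemma sq_half_minus_le:
  fixes p v t :: real
  assumes "0 \<le> p" "0 < v" "p + v < 2 * t" "v \<le> 1 - p" "t < 1/2"
  shows "(1/2 - t)^2 \<le> 1/4 - p + p / (4 * v)"
proof -
  define q where "q = 1 - p - v"
  have q: "0 \<le> q" "q \<le> 1 - v" using assms by (auto simp: q_def)
  define E where "E = (1 - 2*v)^2 + q * (4*v - 1) - v * q^2"
  have E_nonneg: "0 \<le> E"
  proof (cases "v < 1")
    case True
    \<comment> \<open>a sum-of-nonnegative-terms certificate for \<open>(1 - v) * E\<close>\<close>
    have "(1 - v) * E
        = (1 - v - q) * (1 - 2*v)^2 + q * (v^2 * (2 - v)) + ((1 - v) * v * q) * (1 - v - q)"
      unfolding E_def by (simp add: power2_eq_square algebra_simps)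
    also have "\<dots> \<ge> 0" using q assms True by (intro add_nonneg_nonneg mult_nonneg_nonneg) auto
    finally show ?thesis using True by (simp add: zero_le_mult_iff)
  next
    case False
    then have "q = 0" using q by simp
    then show ?thesis unfolding E_def by simp
  qed
  have "v * q^2 \<le> v - 4*p*v + p"
    using E_nonneg unfolding E_def q_def by (simp add: power2_eq_square algebra_simps)
  then have "q^2 \<le> 1 - 4*p + p / v" using assms(2) by (simp add: field_simps)
  moreover have "(1/2 - t)^2 \<le> (q / 2)^2" using assms by (intro power_mono) (auto simp: q_def)
  ultimately show ?thesis by (simp add: field_simps)
qed

text \<open>Read \<open>K = k\<close>, \<open>N = n\<close>, \<open>g = |G|\<close>, \<open>u\<close> the voters an optimal-coverage committee covers beyond
  \<open>G\<close>, and \<open>r\<close> the coverage slots; the remaining \<open>K - g - r\<close> slots secure that share of the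
  optimal welfare.\<close>

lemma reserved_share_bound:
  fixes K N g u r c :: real
  assumes K: "1 \<le> K" and N: "0 < N" and c: "2 < c" and g: "0 \<le> g" and u: "0 \<le> u"
    and few: "c * (g * N + K * u) < 2 * K * N"
    and uncovered: "K * u \<le> K * N - g * N"
    and r: "r = 0 \<or> g * N + 4 * r * u < 3 * K * u + 4 * u"
  shows "(c - 2)^2 / (4 * c^2) - 1 / K \<le> (K - g - r) / K"
proof -
  define t p v where "t = 1 / c" and "p = g / K" and "v = u / N"
  have t: "0 < t" "t < 1/2" using c by (auto simp: t_def field_simps)
  have ct: "(c - 2)^2 / (4 * c^2) = (1/2 - t)^2"
    using c by (simp add: t_def field_simps power2_eq_square)
  have pv: "p + v < 2 * t" using few K N c by (simp add: t_def p_def v_def field_simps)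
  have p: "0 \<le> p" using g K by (simp add: p_def)
  have v: "0 \<le> v" "v \<le> 1 - p" using u uncovered K N by (auto simp: v_def p_def field_simps)
  from r show ?thesis
  proof
    assume "r = 0"
    then have "(K - g - r) / K = 1 - p" using K by (simp add: p_def field_simps)
    moreover have "(1/2 - t)^2 \<le> 1 - 2 * t"
    proof -
      have "t * t \<le> t * (1/2)" using t by (intro mult_left_mono) auto
      moreover have "(1/2 - t)^2 = 1/4 - t + t * t" by (simp add: power2_eq_square algebra_simps)
      ultimately show ?thesis using t by linarith
    qed
    moreover have "0 \<le> 1 / K" using K by simp
    ultimately show ?thesis using ct pv v by linarith
  next
    assume r': "g * N + 4 * r * u < 3 * K * u + 4 * u"
    moreover have "0 \<le> g * N" using g N by simp
    ultimately have "0 < u" using u by (cases "u = 0") auto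
    then have "0 < v" using N by (simp add: v_def)
    have "r / K < 3/4 - p / (4 * v) + 1 / K"
      using r' \<open>0 < u\<close> K N by (simp add: p_def v_def field_simps)
    moreover have "(K - g - r) / K = 1 - p - r / K" using K by (simp add: p_def field_simps)
    moreover have "(1/2 - t)^2 \<le> 1/4 - p + p / (4 * v)"
      using sq_half_minus_le[OF p \<open>0 < v\<close> pv v(2) t(2)] .
    ultimately show ?thesis using ct by linarith
  qed
qed

lemma two_sub_le_div_one_add:
  fixes a b r :: real
  assumes a: "0 < a" and b: "4 * a^2 < b" and r: "12/5 * a - b \<le> r" "0 \<le> r"
  shows "2 * a - b \<le> r / (1 + r)"
proof (cases "b < 2 * a")
  case False
  moreover have "0 \<le> r / (1 + r)" using r by simp
  ultimately show ?thesis by linarith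
next
  case True
  define r0 where "r0 = 12/5 * a - b"
  have r0: "0 < r0" using True a by (simp add: r0_def)
  have "a < 1/2"
  proof -
    have "a * (4 * a) < a * 2" using b True by (simp add: power2_eq_square algebra_simps)
    then show ?thesis using a by simp
  qed
  have "(2*a - b) * (12/5*a - b) \<le> (2*a - 4*a^2) * (12/5*a - 4*a^2)"
    using a b True \<open>a < 1/2\<close> by (intro mult_mono) (auto simp: power2_eq_square)
  also have "\<dots> \<le> 2/5 * a"
  proof -
    \<comment> \<open>a sum-of-nonnegative-terms certificate, valid for \<open>0 < a < 1/2\<close>\<close>
    have "2 - 24*a + 88*a^2 - 80*a^3 = (296/5)*(1-2*a)*(a-9/50)^2 + (192/5)*a*(a-9/50)^2
        + (256/3125)*(1-2*a) + (212/3125)*a"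
      by (simp add: power2_eq_square power3_eq_cube field_simps)
    also have "\<dots> \<ge> 0" using a \<open>a < 1/2\<close> by (intro add_nonneg_nonneg mult_nonneg_nonneg) auto
    finally have "a * (24*a - 88*a^2 + 80*a^3) \<le> a * 2" using a by (intro mult_left_mono) auto
    then show ?thesis by (simp add: power2_eq_square power3_eq_cube algebra_simps)
  qed
  finally have "(2*a - b) * (1 + r0) \<le> r0" by (simp add: r0_def algebra_simps)
  then have "2*a - b \<le> r0 / (1 + r0)" using r0 by (simp add: field_simps)
  also have "\<dots> \<le> r / (1 + r)" using r r0 by (simp add: r0_def field_simps)
  finally show ?thesis .
qed

lemma excess_share_ge:
  fixes K N S L Q m c :: real
  assumes K: "0 < K" and N: "0 < N" and S: "0 < S" and c: "0 < c" and m: "0 \<le> m"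
    and few: "K * S < (m + 1) * N" and L: "Q + m * max 0 (K * S - N) \<le> K * L"
    and Q: "3 * K * N \<le> 2 * c * Q"
  shows "S / N + 3 * N / (2 * c * K * S) - 2 / K \<le> L / (K * S)"
proof -
  have Q': "3 * N / (2 * c * K * S) \<le> Q / (K * K * S)"
    using Q K S c by (simp add: field_simps)
  show ?thesis
  proof (cases "N \<le> K * S")
    case True
    have "(K * S / N - 1) * (K * S - N) \<le> m * (K * S - N)"
      using few True N by (intro mult_right_mono) (auto simp: field_simps)
    moreover have "(K * S - N)^2 / N = (K * S / N - 1) * (K * S - N)"
      using N by (simp add: power2_eq_square field_simps)
    ultimately have "Q + (K * S - N)^2 / N \<le> K * L" using L True by simp
    then have "(Q + (K * S - N)^2 / N) / (K * K * S) \<le> K * L / (K * K * S)"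
      using K S by (intro divide_right_mono) auto
    then have "Q / (K * K * S) + (K * S - N)^2 / (N * K * K * S) \<le> L / (K * S)"
      using K by (simp add: add_divide_distrib mult.assoc)
    moreover have "(K * S - N)^2 / (N * K * K * S) = S / N - 2 / K + N / (K * K * S)"
      using K S N by (simp add: power2_eq_square field_simps)
    moreover have "0 \<le> N / (K * K * S)" using K S N by simp
    ultimately show ?thesis using Q' by linarith
  next
    case False
    then have "Q \<le> K * L" using L m by simp
    then have "Q / (K * K * S) \<le> L / (K * S)" using K S by (simp add: field_simps)
    moreover have "S / N < 1 / K" using False K N by (simp add: field_simps)
    moreover have "0 \<le> 1 / K" using K by simp
    ultimately show ?thesis using Q' by linarith
  qed
qed

text \<open>Read \<open>L\<close> as a lower bound on the welfare of the committee, \<open>S\<close> as the largest score outside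
  it, so that the optimal welfare is at most \<open>L + K S\<close>, and \<open>m\<close> as the number of GJCR members
  scoring at least \<open>S\<close>.\<close>

lemma welfare_share_bound:
  fixes K N S L Q m c :: real
  assumes K: "1 \<le> K" and N: "0 < N" and S: "0 < S" and c: "2 < c" and m: "0 \<le> m"
    and few: "K * S < (m + 1) * N" and L: "Q + m * max 0 (K * S - N) \<le> K * L"
    and Q: "3 * K * N \<le> 2 * c * Q"
  shows "2 / sqrt (c * K) - 2 / K \<le> L / (L + K * S)"
proof -
  define \<sigma> \<rho> a where "\<sigma> = S / N" and "\<rho> = L / (K * S)" and "a = 1 / sqrt (c * K)"
  have cK: "0 < c * K" using c K by simp
  have \<sigma>: "0 < \<sigma>" using S N by (simp add: \<sigma>_def)
  have a: "0 < a" "a^2 = 1 / (c * K)" using cK by (simp_all add: a_def power_divide)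
  have "0 < 2 * c * Q" using Q K N by (smt (verit) mult_pos_pos)
  then have "0 \<le> Q" using c by (simp add: zero_less_mult_iff)
  moreover have "0 \<le> m * max 0 (K * S - N)" using m by simp
  ultimately have "0 \<le> K * L" using L by linarith
  then have "0 \<le> L" using K by (simp add: zero_le_mult_iff)
  then have \<rho>: "0 \<le> \<rho>" using K S by (simp add: \<rho>_def)
  have "\<sigma> + 3 * N / (2 * c * K * S) - 2 / K \<le> \<rho>"
    unfolding \<sigma>_def \<rho>_def using K c by (intro excess_share_ge[OF _ N S _ m few L Q]) auto
  moreover have "3 * N / (2 * c * K * S) = 3/2 * a^2 / \<sigma>"
    using a(2) N S by (simp add: \<sigma>_def field_simps)
  ultimately have key: "\<sigma> + 3/2 * a^2 / \<sigma> - 2 / K \<le> \<rho>" by simp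
  have "36/25 * a^2 / \<sigma> \<le> 3/2 * a^2 / \<sigma>" using \<sigma> by (intro divide_right_mono) auto
  moreover have "12/5 * a \<le> \<sigma> + 36/25 * a^2 / \<sigma>"
  proof -
    have "12/5 * a * \<sigma> \<le> \<sigma> * \<sigma> + 36/25 * a^2"
      using sum_squares_ge_zero[of "\<sigma> - 6/5 * a" 0] by (simp add: power2_eq_square algebra_simps)
    then show ?thesis using \<sigma> by (simp add: field_simps power2_eq_square)
  qed
  ultimately have "12/5 * a - 2 / K \<le> \<rho>" using key by linarith
  moreover have "4 * a^2 < 2 / K"
  proof -
    have "2 / K * (2 / c) < 2 / K * 1" using c K by (intro mult_strict_left_mono) auto
    moreover have "4 * a^2 = 2 / K * (2 / c)" using a(2) by simp
    ultimately show ?thesis by simp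
  qed
  ultimately have "2 * a - 2 / K \<le> \<rho> / (1 + \<rho>)"
    using two_sub_le_div_one_add[OF a(1)] \<rho> by blast
  moreover have "\<rho> / (1 + \<rho>) = L / (L + K * S)" using K S \<open>0 \<le> L\<close> by (simp add: \<rho>_def field_simps)
  ultimately show ?thesis by (simp add: a_def)
qed

lemma coverage_budget_suffices:
  fixes K N g u V :: real
  assumes K: "0 < K" and N: "0 \<le> N" and g: "0 \<le> g" and u: "0 \<le> u"
    and gV: "g * N \<le> K * V" and uV: "u + V \<le> N"
  shows "3 * K * u \<le> g * N + 4 * (K - g) * u"
proof (cases "4 * g \<le> K")
  case True
  then have "3 * K * u \<le> 4 * (K - g) * u" using u by (intro mult_right_mono) auto
  moreover have "0 \<le> g * N" using g N by simp
  ultimately show ?thesis by linarith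
next
  case False
  have "K * u \<le> K * N - g * N" using uV gV K by (smt (verit) mult_left_mono distrib_left)
  then have "(K - 4 * g) * (K * N - g * N) \<le> (K - 4 * g) * (K * u)"
    using False by (intro mult_left_mono_neg) auto
  moreover have "K * g * N + (K - 4 * g) * (K * N - g * N) = N * (K - 2 * g)^2"
    by (simp add: algebra_simps power2_eq_square)
  moreover have "0 \<le> N * (K - 2 * g)^2" using N by simp
  ultimately have "0 \<le> K * (g * N + 4 * (K - g) * u - 3 * K * u)" by (simp add: algebra_simps)
  then show ?thesis using K by (simp add: zero_le_mult_iff)
qed

lemma coverage_budget_exists:
  fixes k n g u V :: nat
  assumes gV: "g * n \<le> k * V" and uV: "u + V \<le> n" and gk: "g \<le> k"
  obtains r where "r \<le> k - g" "3 * k * u \<le> g * n + 4 * r * u"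
    "r = 0 \<or> g * n + 4 * r * u < 3 * k * u + 4 * u"
proof -
  let ?enough = "\<lambda>r. 3 * k * u \<le> g * n + 4 * r * u"
  have "?enough (k - g)"
  proof (cases "k = 0")
    case False
    have "real g * real n \<le> real k * real V" using gV by (simp flip: of_nat_mult)
    then have "3 * real k * real u \<le> real g * real n + 4 * (real k - real g) * real u"
      using uV False by (intro coverage_budget_suffices) auto
    then have "real (3 * k * u) \<le> real (g * n + 4 * (k - g) * u)" using gk by simp
    then show ?thesis by (simp only: of_nat_le_iff)
  qed (use gk in simp)
  define r where "r = (LEAST r. ?enough r)"
  have "r \<le> k - g" "?enough r"
    using Least_le[of ?enough] LeastI[of ?enough] \<open>?enough (k - g)\<close> by (simp_all add: r_def)
  moreover have "r = 0 \<or> g * n + 4 * r * u < 3 * k * u + 4 * u"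
  proof (cases r)
    case (Suc r')
    then have "\<not> ?enough r'" using not_less_Least[of r' ?enough] by (simp add: r_def)
    then show ?thesis using Suc by (simp add: algebra_simps)
  qed simp
  ultimately show ?thesis using that by blast
qed

lemma heavy_subset_card_eq:
  fixes w :: "'a \<Rightarrow> real"
  assumes "finite X" "\<forall>x\<in>X. 0 \<le> w x" "r \<le> card X"
  obtains Y where "Y \<subseteq> X" "card Y = r" "real r * sum w X \<le> real (card X) * sum w Y"
proof (cases "r = 0")
  case False
  from assms show ?thesis using that
  proof (induction "card X - r" arbitrary: X thesis)
    case 0
    then show ?case by fastforce
  next
    case (Suc d)
    note fin = Suc.prems(1) and nonneg = Suc.prems(2) and obtain_Y = Suc.prems(4)
    have m: "r < card X" "X \<noteq> {}" using Suc.hyps(2) by auto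
    have "Min (w ` X) \<in> w ` X" using fin m(2) by simp
    then obtain x where "x \<in> X" "w x = Min (w ` X)" by (metis imageE)
    then have x: "x \<in> X" "\<forall>y\<in>X. w x \<le> w y" using fin by auto
    define m where "m = real (card X)"
    have card_X': "real (card (X - {x})) = m - 1" using x fin m by (simp add: m_def)
    have "d = card (X - {x}) - r" "r \<le> card (X - {x})" using Suc.hyps(2) x m(1) by auto
    then obtain Y where Y: "Y \<subseteq> X - {x}" "card Y = r" "real r * sum w (X - {x}) \<le> (m - 1) * sum w Y"
      using Suc.hyps(1)[of "X - {x}"] fin nonneg card_X' by auto
    have "m * w x \<le> sum w X" using sum_mono[of X "\<lambda>_. w x" w] x by (simp add: m_def)
    then have "real r * (m * w x) \<le> real r * sum w X" by (intro mult_left_mono) auto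
    moreover have "sum w X = sum w (X - {x}) + w x" using x fin by (simp add: sum.remove)
    ultimately have "(m - 1) * (real r * sum w X) \<le> m * (real r * sum w (X - {x}))"
      by (simp add: algebra_simps)
    also have "\<dots> \<le> m * ((m - 1) * sum w Y)" using Y(3) by (simp add: m_def mult_left_mono)
    finally have "(m - 1) * (real r * sum w X) \<le> (m - 1) * (m * sum w Y)" by (simp add: algebra_simps)
    moreover have "0 < m - 1" using m(1) False by (simp add: m_def)
    ultimately show ?case using obtain_Y Y by (auto simp: m_def)
  qed
qed (use that[of "{}"] in simp)

lemma heavy_subset:
  fixes w :: "'a \<Rightarrow> real"
  assumes "finite X" "\<forall>x\<in>X. 0 \<le> w x" "card X \<le> k" "r \<le> k"
  obtains Y where "Y \<subseteq> X" "card Y \<le> r" "real r * sum w X \<le> real k * sum w Y"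
proof (cases "r \<le> card X")
  case True
  then obtain Y where Y: "Y \<subseteq> X" "card Y = r" "real r * sum w X \<le> real (card X) * sum w Y"
    using heavy_subset_card_eq assms by blast
  moreover have "real (card X) * sum w Y \<le> real k * sum w Y"
    using Y assms by (intro mult_right_mono sum_nonneg) auto
  ultimately show ?thesis using that by force
next
  case False
  then show ?thesis
    using that[of X] assms by (simp add: mult_right_mono sum_nonneg)
qed

section \<open>Scores, welfare and coverage\<close>

definition score :: "nat \<Rightarrow> (nat \<Rightarrow> 'c set) \<Rightarrow> 'c \<Rightarrow> nat" where
  "score n A x = card {i\<in>{1..n}. x \<in> A i}"

definition score_rank :: "nat \<Rightarrow> (nat \<Rightarrow> 'c set) \<Rightarrow> 'c set \<Rightarrow> 'c \<Rightarrow> nat" where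
  "score_rank n A W x = card {g\<in>W. score n A x \<le> score n A g}"

definition cov_gain :: "nat \<Rightarrow> (nat \<Rightarrow> 'c set) \<Rightarrow> 'c set \<Rightarrow> 'c set \<Rightarrow> nat" where
  "cov_gain n A G F = card {i\<in>{1..n}. A i \<inter> G = {} \<and> A i \<inter> F \<noteq> {}}"

lemma score_le: "score n A x \<le> n"
proof -
  have "score n A x \<le> card {1..n}" unfolding score_def by (intro card_mono) auto
  then show ?thesis by simp
qed

lemma sw_eq_sum_score:
  assumes "finite W"
  shows "sw n A W = (\<Sum>x\<in>W. score n A x)"
proof -
  have "card (A i \<inter> W) = (\<Sum>x\<in>W. if x \<in> A i then 1 else 0)" for i
    using sum.inter_filter[OF assms, of "\<lambda>_. 1::nat" "\<lambda>x. x \<in> A i"] by (simp add: Int_def conj_commute)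
  then have "sw n A W = (\<Sum>i\<in>{1..n}. \<Sum>x\<in>W. if x \<in> A i then 1 else 0)"
    unfolding sw_def by simp
  also have "\<dots> = (\<Sum>x\<in>W. \<Sum>i\<in>{1..n}. if x \<in> A i then 1 else 0)" by (rule sum.swap)
  also have "\<dots> = (\<Sum>x\<in>W. score n A x)"
    unfolding score_def using sum.inter_filter[of "{1..n}" "\<lambda>_. 1::nat"] by simp
  finally show ?thesis .
qed

lemma sw_Un_disjoint:
  assumes "finite X" "finite Y" "X \<inter> Y = {}"
  shows "sw n A (X \<union> Y) = sw n A X + sw n A Y"
  using assms by (simp add: sw_eq_sum_score sum.union_disjoint)

lemma sw_mono:
  assumes "X \<subseteq> Y" "finite Y"
  shows "sw n A X \<le> sw n A Y"
  unfolding sw_def using assms by (intro sum_mono card_mono) auto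

lemma cov_le: "cov n A W \<le> n"
proof -
  have "cov n A W \<le> card {1..n}" unfolding cov_def by (intro card_mono) auto
  then show ?thesis by simp
qed

lemma cov_mono:
  assumes "X \<subseteq> Y"
  shows "cov n A X \<le> cov n A Y"
  unfolding cov_def using assms by (intro card_mono) auto

lemma cov_Un_eq: "cov n A (G \<union> F) = cov n A G + cov_gain n A G F"
proof -
  have "{i\<in>{1..n}. A i \<inter> (G \<union> F) \<noteq> {}}
      = {i\<in>{1..n}. A i \<inter> G \<noteq> {}} \<union> {i\<in>{1..n}. A i \<inter> G = {} \<and> A i \<inter> F \<noteq> {}}"
    by auto
  then show ?thesis unfolding cov_def cov_gain_def by (simp add: card_Un_disjoint disjoint_iff)
qed

lemma sw_add_cov_gain_le:
  assumes "G \<union> F \<subseteq> W" "finite W"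
  shows "sw n A G + cov_gain n A G F \<le> sw n A W"
proof -
  let ?gain = "\<lambda>i. if A i \<inter> G = {} \<and> A i \<inter> F \<noteq> {} then 1 else 0 :: nat"
  have fin: "finite (A i \<inter> W)" for i using assms(2) by simp
  have "card (A i \<inter> G) + ?gain i \<le> card (A i \<inter> W)" for i
  proof (cases "A i \<inter> G = {} \<and> A i \<inter> F \<noteq> {}")
    case True
    then have "A i \<inter> W \<noteq> {}" using assms(1) by auto
    then show ?thesis using True fin by (simp add: card_gt_0_iff Suc_le_eq)
  next
    case False
    then show ?thesis using assms fin card_mono[of "A i \<inter> W" "A i \<inter> G"] by auto
  qed
  then have "(\<Sum>i\<in>{1..n}. card (A i \<inter> G) + ?gain i) \<le> sw n A W"
    unfolding sw_def by (intro sum_mono)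
  then show ?thesis
    by (simp add: sum.distrib sw_def cov_gain_def sum.If_cases Int_def conj_commute)
qed

lemma card_mult_add_le_k_mult_sw:
  assumes "finite G" "\<forall>g\<in>G. n \<le> score n A g * k"
  shows "real (card G) * real n
      + real (score_rank n A G x) * max 0 (real k * real (score n A x) - real n)
    \<le> real k * real (sw n A G)"
proof -
  let ?M = "max 0 (real k * real (score n A x) - real n)"
  have "real n + (if score n A x \<le> score n A g then ?M else 0) \<le> real k * real (score n A g)"
    if "g \<in> G" for g
  proof -
    have "real n \<le> real k * real (score n A g)"
      using assms(2) that by (simp add: mult.commute flip: of_nat_mult)
    moreover have "real k * real (score n A x) \<le> real k * real (score n A g)"
      if "score n A x \<le> score n A g" using that by (simp add: mult_left_mono)
    ultimately show ?thesis by auto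
  qed
  then have "(\<Sum>g\<in>G. real n + (if score n A x \<le> score n A g then ?M else 0))
      \<le> (\<Sum>g\<in>G. real k * real (score n A g))" by (intro sum_mono)
  then show ?thesis
    using assms(1)
    by (simp add: sum.distrib sum.If_cases score_rank_def sw_eq_sum_score sum_distrib_left Int_def)
qed

lemma ex_card_subset_attaining_Max:
  fixes f :: "'c set \<Rightarrow> nat"
  assumes "finite C" "k \<le> card C"
  obtains T where "T \<subseteq> C" "card T = k" "Max {f W | W. W \<subseteq> C \<and> card W = k} = f T"
proof -
  let ?S = "{W. W \<subseteq> C \<and> card W = k}"
  have "finite ?S" by (rule finite_subset[of _ "Pow C"]) (use assms(1) in auto)
  moreover have "?S \<noteq> {}" using obtain_subset_with_card_n[OF assms(2)] by auto
  ultimately have "Max (f ` ?S) \<in> f ` ?S" by simp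
  moreover have "{f W | W. W \<subseteq> C \<and> card W = k} = f ` ?S" by auto
  ultimately show ?thesis using that by auto
qed

lemma max_sw_le_sw_add:
  assumes inst: "abc_instance n A C k" and "W \<subseteq> C" and s: "\<forall>y\<in>C - W. score n A y \<le> s"
  shows "max_sw n A C k \<le> sw n A W + k * s"
proof -
  have fin: "finite C" "k \<le> card C" using inst by (simp_all add: abc_instance_def)
  obtain T where T: "T \<subseteq> C" "card T = k" "max_sw n A C k = sw n A T"
    using ex_card_subset_attaining_Max[OF fin] unfolding max_sw_def by blast
  have fin_T: "finite T" "finite W" using T(1) assms(2) fin(1) finite_subset by auto
  have "sw n A T = sw n A (T \<inter> W) + sw n A (T - W)"
    using fin_T by (simp add: sw_eq_sum_score sum.Int_Diff[of T _ W])
  moreover have "sw n A (T \<inter> W) \<le> sw n A W" using fin_T by (intro sw_mono) auto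
  moreover have "sw n A (T - W) \<le> card (T - W) * s"
    using fin_T s T(1) sum_bounded_above[of "T - W" "score n A" s] by (auto simp: sw_eq_sum_score)
  moreover have "card (T - W) \<le> k" using T(2) fin_T by (metis card_mono Diff_subset)
  ultimately show ?thesis using T(3) mult_le_mono1[of "card (T - W)" k s] by linarith
qed

lemma cov_gain_subset_exists:
  assumes "finite S" "card S \<le> k" "r \<le> k"
  obtains F where "F \<subseteq> S" "card F \<le> r" "r * cov_gain n A G S \<le> k * cov_gain n A G F"
proof -
  let ?U = "\<lambda>X. {i\<in>{1..n}. A i \<inter> G = {} \<and> A i \<inter> X \<noteq> {}}"
  \<comment> \<open>charge every voter newly covered by \<open>S\<close> to one member of \<open>S\<close> it approves\<close>
  define rep where "rep i = (SOME b. b \<in> A i \<inter> S)" for i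
  have rep: "rep i \<in> A i \<inter> S" if "i \<in> ?U S" for i
    using that someI_ex[of "\<lambda>b. b \<in> A i \<inter> S"] by (auto simp: rep_def)
  define D where "D b = {i \<in> ?U S. rep i = b}" for b
  have fin_D: "finite (D b)" for b by (simp add: D_def)
  have card_UN: "card (\<Union>b\<in>X. D b) = (\<Sum>b\<in>X. card (D b))" if "finite X" for X
    using that fin_D by (intro card_UN_disjoint) (auto simp: D_def)
  have "?U S = (\<Union>b\<in>S. D b)" using rep by (auto simp: D_def)
  then have gain_S: "cov_gain n A G S = (\<Sum>b\<in>S. card (D b))"
    unfolding cov_gain_def using card_UN[OF assms(1)] by simp
  obtain F where F: "F \<subseteq> S" "card F \<le> r"
    "real r * (\<Sum>b\<in>S. real (card (D b))) \<le> real k * (\<Sum>b\<in>F. real (card (D b)))"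
    using heavy_subset[of S "\<lambda>b. real (card (D b))" k r] assms by auto
  have "finite F" using F(1) assms(1) finite_subset by blast
  have "(\<Union>b\<in>F. D b) \<subseteq> ?U F" using rep F(1) by (fastforce simp: D_def)
  then have "(\<Sum>b\<in>F. card (D b)) \<le> cov_gain n A G F"
    unfolding cov_gain_def card_UN[OF \<open>finite F\<close>, symmetric] by (intro card_mono) auto
  then have "k * (\<Sum>b\<in>F. card (D b)) \<le> k * cov_gain n A G F" by simp
  moreover have "r * (\<Sum>b\<in>S. card (D b)) \<le> k * (\<Sum>b\<in>F. card (D b))"
    using F(3) by (simp flip: of_nat_sum of_nat_mult)
  ultimately have "r * cov_gain n A G S \<le> k * cov_gain n A G F" unfolding gain_S by linarith
  then show ?thesis using that F(1,2) by blast
qed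

lemma sw_completion_exists:
  assumes inst: "abc_instance n A C k" and "finite H" "r \<le> k"
  obtains F where "F \<subseteq> C" "card F \<le> r" "r * max_sw n A C k \<le> k * sw n A (H \<union> F)"
proof -
  have fin: "finite C" "k \<le> card C" using inst by (simp_all add: abc_instance_def)
  obtain T where T: "T \<subseteq> C" "card T = k" "max_sw n A C k = sw n A T"
    using ex_card_subset_attaining_Max[OF fin] unfolding max_sw_def by blast
  have fin_T: "finite T" using T(1) fin(1) finite_subset by blast
  have "card (T - H) \<le> k" using T(2) fin_T by (metis card_mono Diff_subset)
  then obtain F where F: "F \<subseteq> T - H" "card F \<le> r"
    "real r * (\<Sum>x\<in>T - H. real (score n A x)) \<le> real k * (\<Sum>x\<in>F. real (score n A x))"
    using heavy_subset[of "T - H" "\<lambda>x. real (score n A x)" k r] fin_T assms(3) by auto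
  have fin_F: "finite F" using F(1) fin_T finite_subset by blast
  have "r * sw n A (T - H) \<le> k * sw n A F"
    using F(3) fin_T fin_F by (simp add: sw_eq_sum_score flip: of_nat_sum of_nat_mult)
  moreover have "sw n A T = sw n A (T \<inter> H) + sw n A (T - H)"
    using fin_T by (simp add: sw_eq_sum_score sum.Int_Diff[of T _ H])
  moreover have "r * sw n A (T \<inter> H) \<le> k * sw n A H"
    using assms(2,3) sw_mono[of "T \<inter> H" H n A] by (simp add: mult_le_mono)
  moreover have "sw n A (H \<union> F) = sw n A H + sw n A F"
    using F(1) fin_F assms(2) by (intro sw_Un_disjoint) auto
  ultimately have "r * sw n A T \<le> k * sw n A (H \<union> F)" by (simp add: algebra_simps)
  then show ?thesis using that F(1,2) T by auto
qed

section \<open>The greedy justified candidate rule\<close>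

definition unsatisfied_supporters :: "nat \<Rightarrow> (nat \<Rightarrow> 'c set) \<Rightarrow> 'c set \<Rightarrow> nat \<Rightarrow> 'c \<Rightarrow> nat set" where
  "unsatisfied_supporters n A W l x = {i\<in>{1..n}. x \<in> A i \<and> card (A i \<inter> W) < l}"

definition eligible :: "nat \<Rightarrow> (nat \<Rightarrow> 'c set) \<Rightarrow> 'c set \<Rightarrow> nat \<Rightarrow> 'c set \<Rightarrow> nat \<Rightarrow> 'c \<Rightarrow> bool" where
  "eligible n A C k W l x \<longleftrightarrow> x \<in> C \<and> x \<notin> W \<and> l * n \<le> card (unsatisfied_supporters n A W l x) * k"

definition EJR_plus_at :: "nat \<Rightarrow> (nat \<Rightarrow> 'c set) \<Rightarrow> nat \<Rightarrow> 'c set \<Rightarrow> nat \<Rightarrow> bool" where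
  "EJR_plus_at n A k W l \<longleftrightarrow> (\<forall>N'. N' \<subseteq> {1..n} \<and> real (card N') \<ge> real l * real n / real k
      \<and> \<Inter>(A ` N') \<noteq> {} \<longrightarrow> (\<exists>i\<in>N'. card (A i \<inter> W) \<ge> l) \<or> \<Inter>(A ` N') \<subseteq> W)"

lemma EJR_plus_iff_EJR_plus_at: "EJR_plus n A k W \<longleftrightarrow> (\<forall>l\<in>{1..k}. EJR_plus_at n A k W l)"
  unfolding EJR_plus_def EJR_plus_at_def by blast

lemma EJR_plus_at_mono:
  assumes "EJR_plus_at n A k W l" "W \<subseteq> W'" "finite W'"
  shows "EJR_plus_at n A k W' l"
proof -
  have "card (A i \<inter> W) \<le> card (A i \<inter> W')" for i using assms(2,3) by (intro card_mono) auto
  then show ?thesis using assms(1,2) unfolding EJR_plus_at_def by (meson le_trans subset_trans)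
qed

lemma EJR_plus_mono: "EJR_plus n A k W \<Longrightarrow> W \<subseteq> W' \<Longrightarrow> finite W' \<Longrightarrow> EJR_plus n A k W'"
  using EJR_plus_at_mono by (metis EJR_plus_iff_EJR_plus_at)

lemma EJR_plus_at_if_none_eligible:
  assumes inst: "abc_instance n A C k" and "1 \<le> l" and none: "\<forall>x. \<not> eligible n A C k W l x"
  shows "EJR_plus_at n A k W l"
  unfolding EJR_plus_at_def
proof (intro allI impI)
  fix N' assume N': "N' \<subseteq> {1..n} \<and> real l * real n / real k \<le> real (card N') \<and> \<Inter> (A ` N') \<noteq> {}"
  show "(\<exists>i\<in>N'. l \<le> card (A i \<inter> W)) \<or> \<Inter> (A ` N') \<subseteq> W"
  proof (rule ccontr)
    assume "\<not> ?thesis"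
    then have unsat: "\<forall>i\<in>N'. card (A i \<inter> W) < l" and "\<not> \<Inter> (A ` N') \<subseteq> W" by auto
    then obtain x where x: "x \<in> \<Inter> (A ` N')" "x \<notin> W" by blast
    have kn: "0 < k" "0 < n" using inst by (auto simp: abc_instance_def)
    then have "0 < real l * real n / real k" using \<open>1 \<le> l\<close> by simp
    then have "N' \<noteq> {}" using N' by auto
    then obtain i where "i \<in> N'" by blast
    then have "x \<in> C" using x N' inst by (auto simp: abc_instance_def)
    have "N' \<subseteq> unsatisfied_supporters n A W l x"
      using N' x unsat by (auto simp: unsatisfied_supporters_def)
    then have "card N' \<le> card (unsatisfied_supporters n A W l x)"
      by (intro card_mono) (auto simp: unsatisfied_supporters_def)
    moreover have "real l * real n \<le> real k * real (card N')" using N' kn by (simp add: field_simps)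
    ultimately have "real l * real n \<le> real k * real (card (unsatisfied_supporters n A W l x))"
      by (meson of_nat_le_iff mult_left_mono of_nat_0_le_iff order_trans)
    then have "eligible n A C k W l x"
      using \<open>x \<in> C\<close> x by (simp add: eligible_def mult.commute flip: of_nat_mult)
    then show False using none by blast
  qed
qed

lemma card_ge_if_not_eligible:
  assumes "\<not> eligible n A C k W l x" "x \<in> C" "x \<notin> W" "l * n \<le> score n A x * k" "finite W"
  shows "l \<le> card W"
proof -
  have "\<not> score n A x \<le> card (unsatisfied_supporters n A W l x)"
  proof
    assume "score n A x \<le> card (unsatisfied_supporters n A W l x)"
    then have "score n A x * k \<le> card (unsatisfied_supporters n A W l x) * k" by simp
    then have "l * n \<le> card (unsatisfied_supporters n A W l x) * k" using assms(4) by linarith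
    then show False using assms(1-3) by (simp add: eligible_def)
  qed
  moreover have "finite (unsatisfied_supporters n A W l x)" by (simp add: unsatisfied_supporters_def)
  ultimately have "\<not> {i\<in>{1..n}. x \<in> A i} \<subseteq> unsatisfied_supporters n A W l x"
    unfolding score_def using card_mono by blast
  then obtain i where "\<not> card (A i \<inter> W) < l" unfolding unsatisfied_supporters_def by blast
  then have "l \<le> card (A i \<inter> W)" by simp
  also have "\<dots> \<le> card W" using assms(5) by (intro card_mono) auto
  finally show ?thesis .
qed

text \<open>The load argument behind \<open>|W| n \<le> k cov(W)\<close>: every member of \<open>W\<close> is paid for by one unit of
  load spread over voters, and during phase \<open>l\<close> a voter with \<open>a\<close> approved members carries at most
  \<open>k/n \<cdot> min 1 (a/l)\<close>.\<close>

definition voter_load_ok :: "nat \<Rightarrow> nat \<Rightarrow> nat \<Rightarrow> nat \<Rightarrow> real \<Rightarrow> bool" where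
  "voter_load_ok n k l a x \<longleftrightarrow> 0 \<le> x \<and> real n * real l * x \<le> real k * real a \<and> real n * x \<le> real k"

definition load_bounded :: "nat \<Rightarrow> (nat \<Rightarrow> 'c set) \<Rightarrow> nat \<Rightarrow> 'c set \<Rightarrow> nat \<Rightarrow> bool" where
  "load_bounded n A k W l \<longleftrightarrow> (\<exists>load. (\<forall>i\<in>{1..n}. voter_load_ok n k l (card (A i \<inter> W)) (load i))
     \<and> sum load {1..n} = real (card W))"

lemma voter_load_ok_Suc: "voter_load_ok n k (Suc l) a x \<Longrightarrow> voter_load_ok n k l a x"
  unfolding voter_load_ok_def
  by (smt (verit) mult_left_mono mult_right_mono of_nat_0_le_iff of_nat_Suc)

lemma voter_load_ok_mono: "voter_load_ok n k l a x \<Longrightarrow> a \<le> a' \<Longrightarrow> voter_load_ok n k l a' x"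
  unfolding voter_load_ok_def by (meson mult_left_mono of_nat_0_le_iff of_nat_le_iff order_trans)

lemma voter_load_ok_add_share:
  assumes "voter_load_ok n k l a x" "a < l" "0 \<le> s" "real n * real l * s \<le> real k"
  shows "voter_load_ok n k l (Suc a) (x + s)"
proof -
  have paid: "real n * real l * (x + s) \<le> real k * real (Suc a)"
    using assms(1,4) by (simp add: voter_load_ok_def algebra_simps)
  moreover have "real k * real (Suc a) \<le> real k * real l" using assms(2) by (intro mult_left_mono) auto
  ultimately have "real l * (real n * (x + s)) \<le> real l * real k" by (simp add: algebra_simps)
  then have "real n * (x + s) \<le> real k" using assms(2) by simp
  moreover have "0 \<le> x + s" using assms(1,3) by (simp add: voter_load_ok_def)
  ultimately show ?thesis using paid unfolding voter_load_ok_def by blast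
qed

lemma load_bounded_empty: "load_bounded n A k {} l"
  unfolding load_bounded_def voter_load_ok_def by (intro exI[of _ "\<lambda>_. 0"]) simp

lemma load_bounded_Suc: "load_bounded n A k W (Suc l) \<Longrightarrow> load_bounded n A k W l"
  unfolding load_bounded_def using voter_load_ok_Suc by blast

lemma load_bounded_insert:
  assumes bounded: "load_bounded n A k W l" and "finite W" "c \<notin> W" "1 \<le> l" "1 \<le> n"
    and large: "l * n \<le> card (unsatisfied_supporters n A W l c) * k"
  shows "load_bounded n A k (insert c W) l"
proof -
  obtain load where load: "\<forall>i\<in>{1..n}. voter_load_ok n k l (card (A i \<inter> W)) (load i)"
    "sum load {1..n} = real (card W)"
    using bounded unfolding load_bounded_def by blast
  define S where "S = unsatisfied_supporters n A W l c"
  have S: "S \<subseteq> {1..n}" "finite S" by (auto simp: S_def unsatisfied_supporters_def)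
  have "0 < l * n" using assms(4,5) by simp
  then have "card S \<noteq> 0" using large unfolding S_def by (intro notI) simp
  have share: "real n * real l * (1 / card S) \<le> real k"
    using large \<open>card S \<noteq> 0\<close> by (simp add: S_def field_simps flip: of_nat_mult)
  define load' where "load' i = load i + (if i \<in> S then 1 / card S else 0)" for i
  have "voter_load_ok n k l (card (A i \<inter> insert c W)) (load' i)" if i: "i \<in> {1..n}" for i
  proof (cases "i \<in> S")
    case True
    then have "c \<in> A i" "card (A i \<inter> W) < l" by (auto simp: S_def unsatisfied_supporters_def)
    then show ?thesis
      using voter_load_ok_add_share[OF _ _ _ share] load(1) i True assms(2,3) by (simp add: load'_def)
  next
    case False
    have "card (A i \<inter> W) \<le> card (A i \<inter> insert c W)" using assms(2) by (intro card_mono) auto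
    moreover have "voter_load_ok n k l (card (A i \<inter> W)) (load i)" using load(1) i by blast
    ultimately show ?thesis using False voter_load_ok_mono by (simp add: load'_def)
  qed
  moreover have "sum load' {1..n} = real (card (insert c W))"
    using load(2) S \<open>card S \<noteq> 0\<close> assms(2,3)
    by (simp add: load'_def sum.distrib sum.If_cases Int_absorb1)
  ultimately show ?thesis unfolding load_bounded_def by blast
qed

lemma card_mult_le_cov_if_load_bounded:
  assumes "load_bounded n A k W 1"
  shows "card W * n \<le> k * cov n A W"
proof -
  obtain load where load: "\<forall>i\<in>{1..n}. voter_load_ok n k 1 (card (A i \<inter> W)) (load i)"
    "sum load {1..n} = real (card W)"
    using assms unfolding load_bounded_def by blast
  have "real n * load i \<le> (if A i \<inter> W \<noteq> {} then real k else 0)" if "i \<in> {1..n}" for i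
  proof -
    have "voter_load_ok n k 1 (card (A i \<inter> W)) (load i)" using load(1) that by blast
    then show ?thesis by (auto simp: voter_load_ok_def)
  qed
  then have "(\<Sum>i\<in>{1..n}. real n * load i) \<le> (\<Sum>i\<in>{1..n}. if A i \<inter> W \<noteq> {} then real k else 0)"
    by (intro sum_mono) auto
  moreover have "(\<Sum>i\<in>{1..n}. real n * load i) = real n * real (card W)"
    using load(2) by (simp add: sum_distrib_left[symmetric])
  moreover have "(\<Sum>i\<in>{1..n}. if A i \<inter> W \<noteq> {} then real k else 0) = real k * real (cov n A W)"
    by (simp add: sum.If_cases cov_def Int_def)
  ultimately show ?thesis by (simp add: mult.commute flip: of_nat_mult)
qed

definition well_ranked :: "nat \<Rightarrow> (nat \<Rightarrow> 'c set) \<Rightarrow> nat \<Rightarrow> 'c set \<Rightarrow> 'c \<Rightarrow> bool" where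
  "well_ranked n A k W x \<longleftrightarrow> (\<forall>l. l * n \<le> score n A x * k \<longrightarrow> l \<le> score_rank n A W x)"

definition dominated_below :: "nat \<Rightarrow> (nat \<Rightarrow> 'c set) \<Rightarrow> nat \<Rightarrow> 'c set \<Rightarrow> nat \<Rightarrow> 'c \<Rightarrow> bool" where
  "dominated_below n A k W l x \<longleftrightarrow>
     score n A x * k < Suc l * n \<and> (\<forall>g\<in>W. score n A x \<le> score n A g)"

lemma well_ranked_mono:
  assumes "well_ranked n A k W x" "W \<subseteq> W'" "finite W'"
  shows "well_ranked n A k W' x"
proof -
  have "score_rank n A W x \<le> score_rank n A W' x"
    unfolding score_rank_def using assms(2,3) by (intro card_mono) auto
  then show ?thesis using assms(1) unfolding well_ranked_def using le_trans by blast
qed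

lemma well_ranked_if_not_eligible:
  assumes dom: "dominated_below n A k W l x" and "\<not> eligible n A C k W l x"
    and "x \<in> C" "x \<notin> W" "l * n \<le> score n A x * k" "finite W"
  shows "well_ranked n A k W x"
proof -
  have "l \<le> card W" using card_ge_if_not_eligible[OF assms(2-6)] .
  moreover have "{g\<in>W. score n A x \<le> score n A g} = W" using dom by (auto simp: dominated_below_def)
  ultimately have rank: "l \<le> score_rank n A W x" by (simp add: score_rank_def)
  have "l' \<le> score_rank n A W x" if "l' * n \<le> score n A x * k" for l'
  proof -
    have "l' < Suc l" using below_threshold[OF that] dom by (simp add: dominated_below_def)
    then show ?thesis using rank by simp
  qed
  then show ?thesis unfolding well_ranked_def by blast
qed

lemma well_ranked_or_dominated_below:
  assumes dom: "dominated_below n A k W (Suc l) x" and "\<not> eligible n A C k W (Suc l) x"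
    and "x \<in> C" "x \<notin> W" "finite W"
  shows "well_ranked n A k W x \<or> dominated_below n A k W l x"
proof (cases "Suc l * n \<le> score n A x * k")
  case True
  then show ?thesis using well_ranked_if_not_eligible[OF assms(1-4) True assms(5)] by blast
next
  case False
  then show ?thesis using dom by (simp add: dominated_below_def)
qed

lemma well_ranked_if_dominated_below_0:
  assumes "dominated_below n A k W 0 x"
  shows "well_ranked n A k W x"
  unfolding well_ranked_def
proof (intro allI impI)
  fix l assume "l * n \<le> score n A x * k"
  then have "l < 1" using assms below_threshold[of l n _ 1] by (simp add: dominated_below_def)
  then show "l \<le> score_rank n A W x" by simp
qed

text \<open>The state of GJCR in phase \<open>l\<close>: the levels above \<open>l\<close> already satisfy EJR+, and every
  outside candidate is either \<open>well_ranked\<close> for good, or scores below the threshold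
  \<open>(l + 1) n / k\<close> of the earlier phases and at most as much as every member of \<open>W\<close>.\<close>

definition gjcr_inv :: "nat \<Rightarrow> (nat \<Rightarrow> 'c set) \<Rightarrow> 'c set \<Rightarrow> nat \<Rightarrow> 'c set \<Rightarrow> nat \<Rightarrow> bool" where
  "gjcr_inv n A C k W l \<longleftrightarrow> W \<subseteq> C \<and> 1 \<le> l \<and> l \<le> k \<and> load_bounded n A k W l
     \<and> (\<forall>l'. l < l' \<and> l' \<le> k \<longrightarrow> EJR_plus_at n A k W l')
     \<and> (\<forall>g\<in>W. n \<le> score n A g * k)
     \<and> (\<forall>x\<in>C - W. well_ranked n A k W x \<or> dominated_below n A k W l x)"

definition gjcr_committee :: "nat \<Rightarrow> (nat \<Rightarrow> 'c set) \<Rightarrow> 'c set \<Rightarrow> nat \<Rightarrow> 'c set \<Rightarrow> bool" where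
  "gjcr_committee n A C k G \<longleftrightarrow> G \<subseteq> C \<and> EJR_plus n A k G \<and> card G * n \<le> k * cov n A G
     \<and> (\<forall>g\<in>G. n \<le> score n A g * k) \<and> (\<forall>x\<in>C - G. well_ranked n A k G x)"

lemma gjcr_inv_empty:
  assumes "abc_instance n A C k"
  shows "gjcr_inv n A C k {} k"
proof -
  have "score n A x * k < Suc k * n" for x
  proof -
    have "score n A x * k \<le> n * k" using score_le[of n A x] by simp
    also have "\<dots> < Suc k * n" using assms by (simp add: abc_instance_def)
    finally show ?thesis .
  qed
  then show ?thesis
    using assms load_bounded_empty by (auto simp: gjcr_inv_def abc_instance_def dominated_below_def)
qed

lemma score_ge_if_eligible:
  assumes "eligible n A C k W l c"
  shows "l * n \<le> score n A c * k"
proof -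
  have "card (unsatisfied_supporters n A W l c) \<le> score n A c"
    unfolding score_def unsatisfied_supporters_def by (intro card_mono) auto
  then have "card (unsatisfied_supporters n A W l c) * k \<le> score n A c * k" by simp
  moreover have "l * n \<le> card (unsatisfied_supporters n A W l c) * k"
    using assms by (simp add: eligible_def)
  ultimately show ?thesis by linarith
qed

lemma well_ranked_or_dominated_below_insert:
  assumes ranked: "well_ranked n A k W x \<or> dominated_below n A k W l x"
    and c: "eligible n A C k W l c" and best: "\<forall>y. eligible n A C k W l y \<longrightarrow> score n A y \<le> score n A c"
    and x: "x \<in> C" "x \<notin> insert c W" and fin: "finite W"
  shows "well_ranked n A k (insert c W) x \<or> dominated_below n A k (insert c W) l x"
proof -
  have mono: "well_ranked n A k W x \<Longrightarrow> well_ranked n A k (insert c W) x"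
    using fin well_ranked_mono[of n A k W x "insert c W"] by blast
  show ?thesis
  proof (cases "score n A x \<le> score n A c")
    case True
    then have "dominated_below n A k W l x \<Longrightarrow> dominated_below n A k (insert c W) l x"
      by (simp add: dominated_below_def)
    then show ?thesis using ranked mono by blast
  next
    case False
    then have not_eligible: "\<not> eligible n A C k W l x" using best by auto
    have "score n A c * k \<le> score n A x * k" using False by simp
    then have above: "l * n \<le> score n A x * k" using score_ge_if_eligible[OF c] by linarith
    have "x \<notin> W" using x(2) by simp
    then have "dominated_below n A k W l x \<Longrightarrow> well_ranked n A k W x"
      using well_ranked_if_not_eligible[OF _ not_eligible x(1) _ above fin] by simp
    then show ?thesis using ranked mono by blast
  qed
qed

lemma gjcr_inv_insert:
  assumes inst: "abc_instance n A C k" and inv: "gjcr_inv n A C k W l"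
    and c: "eligible n A C k W l c" and best: "\<forall>x. eligible n A C k W l x \<longrightarrow> score n A x \<le> score n A c"
  shows "gjcr_inv n A C k (insert c W) l"
proof -
  have WC: "W \<subseteq> C" and l: "1 \<le> l" "l \<le> k" and load: "load_bounded n A k W l"
    and ejr: "\<forall>l'. l < l' \<and> l' \<le> k \<longrightarrow> EJR_plus_at n A k W l'"
    and scores: "\<forall>g\<in>W. n \<le> score n A g * k"
    and ranked: "\<forall>x\<in>C - W. well_ranked n A k W x \<or> dominated_below n A k W l x"
    using inv by (simp_all add: gjcr_inv_def)
  have fin: "finite W" "finite (insert c W)"
    using WC inst finite_subset by (auto simp: abc_instance_def)
  have c': "c \<in> C" "c \<notin> W" and large: "l * n \<le> card (unsatisfied_supporters n A W l c) * k"
    using c by (auto simp: eligible_def)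
  have "n \<le> l * n" using l by simp
  then have "n \<le> score n A c * k" using score_ge_if_eligible[OF c] by (rule order_trans)
  then have scores': "\<forall>g\<in>insert c W. n \<le> score n A g * k" using scores by simp
  have load': "load_bounded n A k (insert c W) l"
    using inst fin c' large l by (intro load_bounded_insert[OF load]) (auto simp: abc_instance_def)
  have ejr': "\<forall>l'. l < l' \<and> l' \<le> k \<longrightarrow> EJR_plus_at n A k (insert c W) l'"
    using ejr EJR_plus_at_mono fin by blast
  have "well_ranked n A k (insert c W) x \<or> dominated_below n A k (insert c W) l x"
    if "x \<in> C - insert c W" for x
    using that ranked by (intro well_ranked_or_dominated_below_insert[OF _ c best _ _ fin(1)]) auto
  then show ?thesis using WC c' l load' ejr' scores' by (simp add: gjcr_inv_def)
qed

lemma gjcr_inv_Suc: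
  assumes inst: "abc_instance n A C k" and inv: "gjcr_inv n A C k W (Suc l)" and "1 \<le> l"
    and none: "\<forall>x. \<not> eligible n A C k W (Suc l) x"
  shows "gjcr_inv n A C k W l"
proof -
  have WC: "W \<subseteq> C" and fin: "finite W"
    using inv inst finite_subset by (auto simp: gjcr_inv_def abc_instance_def)
  have ejr_Suc: "EJR_plus_at n A k W (Suc l)"
    using EJR_plus_at_if_none_eligible[OF inst _ none] by simp
  have ejr: "\<forall>l'. l < l' \<and> l' \<le> k \<longrightarrow> EJR_plus_at n A k W l'"
  proof (intro allI impI)
    fix l' assume "l < l' \<and> l' \<le> k"
    then consider "l' = Suc l" | "Suc l < l' \<and> l' \<le> k" by linarith
    then show "EJR_plus_at n A k W l'" using ejr_Suc inv by cases (simp_all add: gjcr_inv_def)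
  qed
  have "well_ranked n A k W x \<or> dominated_below n A k W l x" if x: "x \<in> C - W" for x
  proof -
    have "well_ranked n A k W x \<or> dominated_below n A k W (Suc l) x"
      using inv x by (simp add: gjcr_inv_def)
    then show ?thesis using well_ranked_or_dominated_below[of n A k W l x C] fin none x by blast
  qed
  moreover have "load_bounded n A k W l"
    using inv load_bounded_Suc[of n A k W l] by (simp add: gjcr_inv_def)
  ultimately show ?thesis using inv ejr \<open>1 \<le> l\<close> by (simp add: gjcr_inv_def)
qed

lemma gjcr_committee_if_gjcr_inv_1:
  assumes inst: "abc_instance n A C k" and inv: "gjcr_inv n A C k W 1"
    and none: "\<forall>x. \<not> eligible n A C k W 1 x"
  shows "gjcr_committee n A C k W"
proof -
  have fin: "finite W" using inv inst finite_subset by (auto simp: gjcr_inv_def abc_instance_def)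
  have "EJR_plus_at n A k W 1" using EJR_plus_at_if_none_eligible[OF inst _ none] by simp
  then have "EJR_plus n A k W"
    using inv by (auto simp: gjcr_inv_def EJR_plus_iff_EJR_plus_at le_less)
  moreover have "card W * n \<le> k * cov n A W"
    using inv by (intro card_mult_le_cov_if_load_bounded) (simp add: gjcr_inv_def)
  moreover have "well_ranked n A k W x" if x: "x \<in> C - W" for x
  proof -
    have "well_ranked n A k W x \<or> dominated_below n A k W (Suc 0) x"
      using inv x by (simp add: gjcr_inv_def)
    then show ?thesis
    proof
      assume "dominated_below n A k W (Suc 0) x"
      then have "well_ranked n A k W x \<or> dominated_below n A k W 0 x"
        using well_ranked_or_dominated_below[of n A k W 0 x C] fin none x by simp
      then show ?thesis by (elim disjE) (simp_all add: well_ranked_if_dominated_below_0)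
    qed
  qed
  ultimately show ?thesis using inv by (simp add: gjcr_inv_def gjcr_committee_def)
qed

lemma gjcr_phase:
  assumes inst: "abc_instance n A C k" and inv: "gjcr_inv n A C k W l"
  obtains W' where "gjcr_inv n A C k W' l" "\<forall>x. \<not> eligible n A C k W' l x"
  using inv
proof (induction "card (C - W)" arbitrary: W rule: less_induct)
  case less
  show ?case
  proof (cases "\<exists>x. eligible n A C k W l x")
    case True
    let ?E = "{x. eligible n A C k W l x}"
    have fin: "finite C" using inst by (simp add: abc_instance_def)
    have "finite ?E" by (rule finite_subset[OF _ fin]) (auto simp: eligible_def)
    moreover have "?E \<noteq> {}" using True by simp
    ultimately have "Max (score n A ` ?E) \<in> score n A ` ?E" by simp
    then obtain c where c: "c \<in> ?E" "score n A c = Max (score n A ` ?E)" by auto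
    then have best: "\<forall>x. eligible n A C k W l x \<longrightarrow> score n A x \<le> score n A c"
      using \<open>finite ?E\<close> by simp
    have "card (C - insert c W) < card (C - W)"
      using c fin by (intro psubset_card_mono) (auto simp: eligible_def)
    moreover have "gjcr_inv n A C k (insert c W) l"
      using gjcr_inv_insert[OF inst less.prems(2)] c best by simp
    ultimately show ?thesis using less.hyps less.prems(1) by blast
  qed (use less.prems in blast)
qed

lemma gjcr_committee_exists:
  assumes inst: "abc_instance n A C k"
  obtains G where "gjcr_committee n A C k G"
proof -
  have "\<exists>W. gjcr_inv n A C k W l \<and> (\<forall>x. \<not> eligible n A C k W l x)" if "1 \<le> l" "l \<le> k" for l
    using that
  proof (induction "k - l" arbitrary: l)
    case 0
    then have "l = k" by simp
    obtain W where "gjcr_inv n A C k W k" "\<forall>x. \<not> eligible n A C k W k x"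
      using gjcr_phase[OF inst gjcr_inv_empty[OF inst]] .
    then show ?case using \<open>l = k\<close> by blast
  next
    case (Suc d)
    then have "d = k - Suc l" "1 \<le> Suc l" "Suc l \<le> k" by simp_all
    then obtain W where W: "gjcr_inv n A C k W (Suc l)" "\<forall>x. \<not> eligible n A C k W (Suc l) x"
      using Suc.hyps(1) by blast
    obtain W' where "gjcr_inv n A C k W' l" "\<forall>x. \<not> eligible n A C k W' l x"
      using gjcr_phase[OF inst gjcr_inv_Suc[OF inst W(1) Suc.prems(1) W(2)]] .
    then show ?case by blast
  qed
  moreover have "1 \<le> k" using inst by (simp add: abc_instance_def)
  ultimately show ?thesis using that gjcr_committee_if_gjcr_inv_1[OF inst] by blast
qed

section \<open>Completing the committee\<close>

text \<open>\<open>u\<close> counts the voters an optimal-coverage committee covers beyond \<open>G\<close>, and \<open>r\<close> is the least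
  number of further slots whose best use reaches \<open>3/4\<close> of the optimal coverage.\<close>

lemma coverage_phase:
  assumes inst: "abc_instance n A C k" and G: "gjcr_committee n A C k G"
  obtains u r F where "F \<subseteq> C" "card F \<le> r" "card G + r \<le> k"
    "3 * k * u \<le> card G * n + 4 * r * u" "r = 0 \<or> card G * n + 4 * r * u < 3 * k * u + 4 * u"
    "u + cov n A G \<le> n" "max_cov n A C k \<le> cov n A G + u" "r * u \<le> k * cov_gain n A G F"
proof -
  have fin: "finite C" and kC: "k \<le> card C" and n: "0 < n" using inst by (auto simp: abc_instance_def)
  have gV: "card G * n \<le> k * cov n A G" using G by (simp add: gjcr_committee_def)
  then have "card G * n \<le> k * n" using cov_le[of n A G] by (meson le_trans mult_le_mono2)
  then have gk: "card G \<le> k" using n by simp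
  obtain S where S: "S \<subseteq> C" "card S = k" "max_cov n A C k = cov n A S"
    using ex_card_subset_attaining_Max[OF fin kC] unfolding max_cov_def by blast
  define u where "u = cov_gain n A G S"
  have opt: "max_cov n A C k \<le> cov n A G + u"
    using S(3) cov_mono[of S "G \<union> S" n A] by (simp add: u_def cov_Un_eq)
  have uV: "u + cov n A G \<le> n" using cov_le[of n A "G \<union> S"] by (simp add: u_def cov_Un_eq)
  obtain r where r: "r \<le> k - card G" "3 * k * u \<le> card G * n + 4 * r * u"
      "r = 0 \<or> card G * n + 4 * r * u < 3 * k * u + 4 * u"
    using coverage_budget_exists[OF gV uV gk] by blast
  have "finite S" using S(1) fin finite_subset by blast
  moreover have "r \<le> k" using r(1) by simp
  ultimately obtain F where "F \<subseteq> S" "card F \<le> r" "r * u \<le> k * cov_gain n A G F"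
    using cov_gain_subset_exists[OF _ S(2)[THEN eq_imp_le], of r n A G] unfolding u_def by blast
  then show ?thesis using that[of F r u] S(1) r gk opt uV by auto
qed

lemma rep_ratio_ge_three_quarters:
  fixes u r :: nat
  assumes "0 < k" and opt: "max_cov n A C k \<le> cov n A G + u" and W: "G \<union> F \<subseteq> W"
    and gV: "card G * n \<le> k * cov n A G" and budget: "3 * k * u \<le> card G * n + 4 * r * u"
    and gain: "r * u \<le> k * cov_gain n A G F"
  shows "3/4 \<le> rep_ratio n A C k W"
proof -
  have "k * (3 * u) \<le> k * (cov n A G + 4 * cov_gain n A G F)"
    using gV budget gain by (simp add: algebra_simps)
  then have "3 * u \<le> cov n A G + 4 * cov_gain n A G F" using \<open>0 < k\<close> by simp
  moreover have "cov n A G + cov_gain n A G F \<le> cov n A W"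
    using cov_mono[OF W, of n A] by (simp add: cov_Un_eq)
  ultimately have "3/4 * real (max_cov n A C k) \<le> real (cov n A W)" using opt by linarith
  then show ?thesis unfolding rep_ratio_def by (intro le_ratio_if_zero_one) auto
qed

lemma best_outsider_exists:
  assumes inst: "abc_instance n A C k" and "W \<subseteq> C" and below_opt: "sw n A W < max_sw n A C k"
  obtains x where "x \<in> C - W" "0 < score n A x" "max_sw n A C k \<le> sw n A W + k * score n A x"
proof -
  have fin: "finite C" using inst by (simp add: abc_instance_def)
  have "C - W \<noteq> {}" using max_sw_le_sw_add[OF inst assms(2), of 0] below_opt by auto
  then have "Max (score n A ` (C - W)) \<in> score n A ` (C - W)" using fin by simp
  then obtain x where x: "x \<in> C - W" "score n A x = Max (score n A ` (C - W))" by auto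
  then have "max_sw n A C k \<le> sw n A W + k * score n A x"
    using fin by (intro max_sw_le_sw_add[OF inst assms(2)]) simp
  moreover from this have "0 < score n A x" using below_opt by (cases "score n A x") auto
  ultimately show ?thesis using that x(1) by blast
qed

lemma score_lt_if_well_ranked:
  assumes "well_ranked n A k G x"
  shows "real k * real (score n A x) < (real (score_rank n A G x) + 1) * real n"
proof -
  have "\<not> Suc (score_rank n A G x) * n \<le> score n A x * k"
    using assms unfolding well_ranked_def by (meson Suc_n_not_le_n)
  then have "score n A x * k < Suc (score_rank n A G x) * n" by simp
  then have "real (score n A x * k) < real (Suc (score_rank n A G x) * n)"
    by (simp only: of_nat_less_iff)
  then show ?thesis by (simp add: algebra_simps)
qed

lemma util_ratio_ge_welfare_share:
  assumes c: "2 < c" and inst: "abc_instance n A C k" and G: "gjcr_committee n A C k G"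
    and W: "G \<subseteq> W" "W \<subseteq> C" and below_opt: "sw n A W < max_sw n A C k"
    and P: "0 \<le> P" "real k * real (sw n A G) + P \<le> real k * real (sw n A W)"
    and large: "3 * real k * real n \<le> 2 * c * (real (card G) * real n + P)"
  shows "2 / sqrt (c * real k) - 2 / real k \<le> util_ratio n A C k W"
proof -
  have fin: "finite C" and k: "1 \<le> k" and n: "1 \<le> n" using inst by (auto simp: abc_instance_def)
  obtain x where x: "x \<in> C - W" "0 < score n A x" and opt: "max_sw n A C k \<le> sw n A W + k * score n A x"
    using best_outsider_exists[OF inst W(2) below_opt] .
  have "finite G" "\<forall>g\<in>G. n \<le> score n A g * k" and "well_ranked n A k G x"
    using G x W(1) fin finite_subset by (auto simp: gjcr_committee_def)
  note sw_G = card_mult_add_le_k_mult_sw[OF this(1,2), of x]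
  define L where "L = real (sw n A G) + P / real k"
  have L: "real k * L = real k * real (sw n A G) + P" using k by (simp add: L_def field_simps)
  then have "2 / sqrt (c * real k) - 2 / real k \<le> L / (L + real k * real (score n A x))"
    using sw_G score_lt_if_well_ranked[OF \<open>well_ranked n A k G x\<close>] k n x(2) c large
    by (intro welfare_share_bound[where Q = "real (card G) * real n + P"]) auto
  also have "\<dots> \<le> real (sw n A W) / real (max_sw n A C k)"
  proof (rule div_add_le_div)
    show "0 \<le> L" using P k by (simp add: L_def)
    have "real k * L \<le> real k * real (sw n A W)" using P(2) L by simp
    then show "L \<le> real (sw n A W)" using k by simp
    show "real (max_sw n A C k) \<le> real (sw n A W) + real k * real (score n A x)"
      using opt by (metis of_nat_add of_nat_le_iff of_nat_mult)
  qed (use below_opt x(2) k in auto)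
  finally show ?thesis using below_opt by (simp add: util_ratio_def)
qed

lemma util_ratio_ge_reserved_share:
  fixes u r :: nat
  assumes c: "2 < c" and inst: "abc_instance n A C k" and G: "gjcr_committee n A C k G"
    and few: "c * (real (card G) * real n + real k * real u) < 2 * real k * real n"
    and budget: "r = 0 \<or> card G * n + 4 * r * u < 3 * k * u + 4 * u" "card G + r \<le> k"
    and uncovered: "u + cov n A G \<le> n"
    and completion: "(k - card G - r) * max_sw n A C k \<le> k * sw n A W"
    and below_opt: "sw n A W < max_sw n A C k"
  shows "(c - 2)^2 / (4 * c^2) - 1 / real k \<le> util_ratio n A C k W"
proof -
  define K N g where "K = real k" and "N = real n" and "g = real (card G)"
  have k: "1 \<le> K" and n: "0 < N" using inst by (auto simp: abc_instance_def K_def N_def)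
  have "g * N \<le> K * real (cov n A G)"
    using G by (simp add: gjcr_committee_def g_def N_def K_def flip: of_nat_mult)
  moreover have "real (u + cov n A G) \<le> N" using uncovered by (simp only: N_def of_nat_le_iff)
  then have "K * (real u + real (cov n A G)) \<le> K * N" using k by (intro mult_left_mono) auto
  ultimately have "K * real u \<le> K * N - g * N" by (simp add: algebra_simps)
  moreover have "real r = 0 \<or> g * N + 4 * real r * real u < 3 * K * real u + 4 * real u"
  proof (cases "r = 0")
    case False
    then have "real (card G * n + 4 * r * u) < real (3 * k * u + 4 * u)"
      using budget(1) by (simp only: of_nat_less_iff) simp
    then show ?thesis by (simp add: g_def N_def K_def)
  qed simp
  ultimately have "(c - 2)^2 / (4 * c^2) - 1 / K \<le> (K - g - real r) / K"
    using k n c few by (intro reserved_share_bound) (auto simp: g_def K_def N_def)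
  also have "\<dots> \<le> util_ratio n A C k W"
  proof -
    have "real (k - card G - r) * real (max_sw n A C k) \<le> K * real (sw n A W)"
      using completion by (simp add: K_def flip: of_nat_mult)
    then show ?thesis using budget(2) below_opt k
      by (simp add: util_ratio_def K_def g_def field_simps)
  qed
  finally show ?thesis by (simp add: K_def)
qed

lemma util_ratio_bound:
  fixes u r :: nat
  assumes c: "2 < c" and inst: "abc_instance n A C k" and G: "gjcr_committee n A C k G"
    and W: "G \<union> F \<subseteq> W" "W \<subseteq> C"
    and budget: "3 * k * u \<le> card G * n + 4 * r * u"
      "r = 0 \<or> card G * n + 4 * r * u < 3 * k * u + 4 * u" "card G + r \<le> k"
    and uncovered: "u + cov n A G \<le> n"
    and gain: "r * u \<le> k * cov_gain n A G F"
    and completion: "(k - card G - r) * max_sw n A C k \<le> k * sw n A W"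
  shows "min (2 / sqrt (c * real k) - 2 / real k) ((c - 2)^2 / (4 * c^2) - 1 / real k)
    \<le> util_ratio n A C k W"
proof (cases "max_sw n A C k \<le> sw n A W")
  case True
  have "(c - 2)^2 \<le> c^2" using c by (intro power_mono) auto
  moreover have "0 \<le> c^2" by simp
  ultimately have "(c - 2)^2 \<le> 4 * c^2" by linarith
  then have "(c - 2)^2 / (4 * c^2) \<le> 4 * c^2 / (4 * c^2)" by (intro divide_right_mono) auto
  then have "(c - 2)^2 / (4 * c^2) \<le> 1" using c by simp
  moreover have "1 \<le> util_ratio n A C k W" using True by (simp add: util_ratio_def)
  moreover have "0 \<le> 1 / real k" by simp
  moreover have "min (2 / sqrt (c * real k) - 2 / real k) ((c - 2)^2 / (4 * c^2) - 1 / real k)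
      \<le> (c - 2)^2 / (4 * c^2) - 1 / real k" by (rule min.cobounded2)
  ultimately show ?thesis by linarith
next
  case False
  define K N g where "K = real k" and "N = real n" and "g = real (card G)"
  consider (few) "c * (g * N + K * real u) < 2 * K * N"
    | (many) "2 * K * N \<le> c * (g * N + K * real u)"
    by linarith
  then show ?thesis
  proof cases
    case few
    then show ?thesis
      using util_ratio_ge_reserved_share[OF c inst G _ budget(2,3) uncovered completion] False
      by (simp add: K_def N_def g_def)
  next
    case many
    have "real (3 * k * u) \<le> real (card G * n + 4 * r * u)" using budget(1) by (simp only: of_nat_le_iff)
    then have "3 * (g * N + K * real u) \<le> 4 * (g * N + real r * real u)"
      by (simp add: g_def N_def K_def algebra_simps)
    then have "c * (3 * (g * N + K * real u)) \<le> c * (4 * (g * N + real r * real u))"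
      using c by (intro mult_left_mono) auto
    then have "3 * K * N \<le> 2 * c * (g * N + real r * real u)" using many by (simp add: algebra_simps)
    moreover have "finite W" using W(2) inst finite_subset by (auto simp: abc_instance_def)
    then have "sw n A G + cov_gain n A G F \<le> sw n A W" using sw_add_cov_gain_le W(1) by blast
    then have "k * sw n A G + k * cov_gain n A G F \<le> k * sw n A W"
      using mult_le_mono2[of _ _ k] by (simp flip: distrib_left)
    then have "K * real (sw n A G) + real r * real u \<le> K * real (sw n A W)"
      using gain by (simp add: K_def flip: of_nat_mult of_nat_add)
    ultimately have "2 / sqrt (c * K) - 2 / K \<le> util_ratio n A C k W"
      using W unfolding K_def N_def g_def
      by (intro util_ratio_ge_welfare_share[OF c inst G]) (use False in auto)
    then show ?thesis by (simp add: K_def)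
  qed
qed

theorem theorem6:
  fixes c :: real and n k :: nat and A :: "nat \<Rightarrow> 'c set" and C :: "'c set"
  assumes "c > 2"
    and "abc_instance n A C k"
  shows "\<exists>W. W \<subseteq> C \<and> card W \<le> k \<and> EJR_plus n A k W
           \<and> rep_ratio n A C k W \<ge> 3/4
           \<and> util_ratio n A C k W \<ge>
               min (2 / sqrt (c * real k) - 2 / real k) ((c - 2)^2 / (4 * c^2) - 1 / real k)"
proof -
  note inst = assms(2)
  have fin: "finite C" and k: "0 < k" using inst by (auto simp: abc_instance_def)
  obtain G where G: "gjcr_committee n A C k G" using gjcr_committee_exists[OF inst] .
  obtain u r F1 where F1: "F1 \<subseteq> C" "card F1 \<le> r" "card G + r \<le> k"
      and budget: "3 * k * u \<le> card G * n + 4 * r * u"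
        "r = 0 \<or> card G * n + 4 * r * u < 3 * k * u + 4 * u"
      and cover: "u + cov n A G \<le> n" "max_cov n A C k \<le> cov n A G + u"
        "r * u \<le> k * cov_gain n A G F1"
    using coverage_phase[OF inst G] .
  have GC: "G \<subseteq> C" and gV: "card G * n \<le> k * cov n A G" and "EJR_plus n A k G"
    using G by (simp_all add: gjcr_committee_def)
  have "finite (G \<union> F1)" using GC F1(1) fin finite_subset by auto
  then obtain F2 where F2: "F2 \<subseteq> C" "card F2 \<le> k - card G - r"
      "(k - card G - r) * max_sw n A C k \<le> k * sw n A (G \<union> F1 \<union> F2)"
    using sw_completion_exists[OF inst, of "G \<union> F1" "k - card G - r"] by auto
  define W where "W = G \<union> F1 \<union> F2"
  have WC: "W \<subseteq> C" and GW: "G \<union> F1 \<subseteq> W" using GC F1(1) F2(1) by (auto simp: W_def)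
  have "card W \<le> card G + card F1 + card F2"
    unfolding W_def using card_Un_le[of G F1] card_Un_le[of "G \<union> F1" F2] by linarith
  then have "card W \<le> k" using F1(2,3) F2(2) by linarith
  moreover have "EJR_plus n A k W"
    using EJR_plus_mono[OF \<open>EJR_plus n A k G\<close>] GW WC fin finite_subset by blast
  moreover have "3/4 \<le> rep_ratio n A C k W"
    using rep_ratio_ge_three_quarters[OF k cover(2) GW gV budget(1) cover(3)] .
  moreover have "min (2 / sqrt (c * real k) - 2 / real k) ((c - 2)^2 / (4 * c^2) - 1 / real k)
      \<le> util_ratio n A C k W"
    using util_ratio_bound[OF assms(1) inst G GW WC budget F1(3) cover(1,3)] F2(3) by (simp add: W_def)
  ultimately show ?thesis using WC by blast
qed

end
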